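(* Let $\omega$ be a rectilinearly-convex obstacle. Then there exists a minimum skeleton $S^*$ for $\omega$ such that each edge of $S^*$ is a maximum length visibility edge of $\omega$.
   Context: An obstacle $\omega$ is a simple polygon in $\mathbb{R}^2$ (a closed, bounded polygonal region without holes whose boundary does not intersect itself), assumed in general position (no three of its vertices are collinear). $\omega$ is rectilinear if each boundary edge is horizontal or vertical, and a rectilinear obstacle is rectilinearly-convex if any two points of $\omega$ can be joined by a shortest rectilinear path (made of horizontal and vertical segments, of minimum $\ell_1$ length) contained in $\omega$. A corner point of a rectilinear path is a point where a horizontal and a vertical segment of the path meet. A set $S$ of closed line segments is inside $\omega$ if the union of its elements is contained in $\omega$. Such an $S$ is a skeleton for $\omega$ if for every pair of points $p,q$ not in the interior of $\omega$ such that every shortest rectilinear path between $p$ and $q$ with at most one corner point meets the interior of $\omega$, each such path intersects some element of $S$. A minimum skeleton is a skeleton with the smallest possible number of segments. A visibility edge is a line segment contained in $\omega$; it is a maximum length visibility edge if it cannot be extended at either end while remaining contained in $\omega$ (i.e. it extends as far as possible in both directions to the boundary of $\omega$). *)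

theory Defs
  imports "HOL-Analysis.Analysis"
begin

type_synonym pt = "real \<times> real"

definition poly_edge :: "pt list \<Rightarrow> nat \<Rightarrow> pt set" where
  "poly_edge vs i = closed_segment (vs ! i) (vs ! ((i + 1) mod length vs))"

definition poly_boundary :: "pt list \<Rightarrow> pt set" where
  "poly_boundary vs = (\<Union>i<length vs. poly_edge vs i)"

definition simple_polygon :: "pt list \<Rightarrow> bool" where
  "simple_polygon vs \<longleftrightarrow> length vs \<ge> 3 \<and> distinct vs \<and>
     (\<forall>i<length vs. \<forall>j<length vs. i \<noteq> j \<longrightarrow>
        (if j = (i + 1) mod length vs then poly_edge vs i \<inter> poly_edge vs j = {vs ! j}
         else if i = (j + 1) mod length vs then poly_edge vs i \<inter> poly_edge vs j = {vs ! i}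
         else poly_edge vs i \<inter> poly_edge vs j = {}))"

definition general_position :: "pt list \<Rightarrow> bool" where
  "general_position vs \<longleftrightarrow>
     (\<forall>i<length vs. \<forall>j<length vs. \<forall>k<length vs.
        i \<noteq> j \<and> j \<noteq> k \<and> i \<noteq> k \<longrightarrow> \<not> collinear {vs ! i, vs ! j, vs ! k})"

definition poly_region :: "pt list \<Rightarrow> pt set" where
  "poly_region vs = poly_boundary vs \<union> inside (poly_boundary vs)"

definition obstacle :: "pt list \<Rightarrow> bool" where
  "obstacle vs \<longleftrightarrow> simple_polygon vs \<and> general_position vs"

definition rectilinear_polygon :: "pt list \<Rightarrow> bool" where
  "rectilinear_polygon vs \<longleftrightarrow>
     (\<forall>i<length vs. fst (vs ! i) = fst (vs ! ((i + 1) mod length vs)) \<or>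
                    snd (vs ! i) = snd (vs ! ((i + 1) mod length vs)))"

definition rect_path :: "pt list \<Rightarrow> bool" where
  "rect_path ps \<longleftrightarrow> ps \<noteq> [] \<and>
     (\<forall>i. i + 1 < length ps \<longrightarrow> ps ! i \<noteq> ps ! (i + 1) \<and>
        (fst (ps ! i) = fst (ps ! (i + 1)) \<or> snd (ps ! i) = snd (ps ! (i + 1))))"

definition l1_dist :: "pt \<Rightarrow> pt \<Rightarrow> real" where
  "l1_dist p q = \<bar>fst p - fst q\<bar> + \<bar>snd p - snd q\<bar>"

definition rect_length :: "pt list \<Rightarrow> real" where
  "rect_length ps = (\<Sum>i<length ps - 1. l1_dist (ps ! i) (ps ! (i + 1)))"

definition path_points :: "pt list \<Rightarrow> pt set" where
  "path_points ps = set ps \<union> (\<Union>i<length ps - 1. closed_segment (ps ! i) (ps ! (i + 1)))"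

definition rect_path_between :: "pt list \<Rightarrow> pt \<Rightarrow> pt \<Rightarrow> bool" where
  "rect_path_between ps p q \<longleftrightarrow> rect_path ps \<and> hd ps = p \<and> last ps = q"

definition shortest_rect_path :: "pt list \<Rightarrow> pt \<Rightarrow> pt \<Rightarrow> bool" where
  "shortest_rect_path ps p q \<longleftrightarrow> rect_path_between ps p q \<and>
     (\<forall>qs. rect_path_between qs p q \<longrightarrow> rect_length ps \<le> rect_length qs)"

text \<open>Segment i (from ps!i to ps!(i+1)) is horizontal iff the y-coordinates agree
  (consecutive points are distinct, so each segment is exactly one of horizontal/vertical).\<close>
definition seg_horizontal :: "pt list \<Rightarrow> nat \<Rightarrow> bool" where
  "seg_horizontal ps i \<longleftrightarrow> snd (ps ! i) = snd (ps ! (i + 1))"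

definition corner_points :: "pt list \<Rightarrow> pt set" where
  "corner_points ps = {ps ! i | i. 0 < i \<and> i + 1 < length ps \<and>
       seg_horizontal ps (i - 1) \<noteq> seg_horizontal ps i}"

definition rectilinearly_convex :: "pt set \<Rightarrow> bool" where
  "rectilinearly_convex \<omega> \<longleftrightarrow>
     (\<forall>p\<in>\<omega>. \<forall>q\<in>\<omega>. \<exists>ps. shortest_rect_path ps p q \<and> path_points ps \<subseteq> \<omega>)"

definition is_segment :: "pt set \<Rightarrow> bool" where
  "is_segment s \<longleftrightarrow> (\<exists>a b. a \<noteq> b \<and> s = closed_segment a b)"

definition skeleton :: "pt set \<Rightarrow> pt set set \<Rightarrow> bool" where
  "skeleton \<omega> S \<longleftrightarrow>
     (\<forall>s\<in>S. is_segment s) \<and> \<Union>S \<subseteq> \<omega> \<and>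
     (\<forall>p q. p \<notin> interior \<omega> \<and> q \<notin> interior \<omega> \<and>
        (\<forall>ps. shortest_rect_path ps p q \<and> card (corner_points ps) \<le> 1 \<longrightarrow>
              path_points ps \<inter> interior \<omega> \<noteq> {}) \<longrightarrow>
        (\<forall>ps. shortest_rect_path ps p q \<and> card (corner_points ps) \<le> 1 \<longrightarrow>
              (\<exists>s\<in>S. path_points ps \<inter> s \<noteq> {})))"

definition minimum_skeleton :: "pt set \<Rightarrow> pt set set \<Rightarrow> bool" where
  "minimum_skeleton \<omega> S \<longleftrightarrow> finite S \<and> skeleton \<omega> S \<and>
     (\<forall>T. finite T \<and> skeleton \<omega> T \<longrightarrow> card S \<le> card T)"

text \<open>Maximum length visibility edge: a segment contained in the obstacle that
  cannot be extended (is not properly contained in a larger segment inside it).\<close>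
definition max_visibility_edge :: "pt set \<Rightarrow> pt set \<Rightarrow> bool" where
  "max_visibility_edge \<omega> s \<longleftrightarrow> is_segment s \<and> s \<subseteq> \<omega> \<and>
     (\<forall>c d. s \<subseteq> closed_segment c d \<and> closed_segment c d \<subseteq> \<omega> \<longrightarrow> closed_segment c d = s)"

end

theory Submission imports Defs begin

(* The polygon edges form a finite skeleton: a polygonal path from a point outside the interior
   of the region to a point of the interior is connected, so it meets the frontier of the interior,
   which lies on the boundary. Hence a minimum skeleton exists. Replacing each of its segments by a
   larger segment inside the region keeps it a skeleton, since only intersections with the segments
   matter, and does not increase the number of segments. Finally every segment inside the compact
   region lies in a maximal one: by compactness there is a longest segment inside the region
   containing it, and a segment contained in another one that is not longer equals it. *)

lemma closed_segment_eq_if_subset_longer: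
  fixes c d c' d' :: "'a::real_normed_vector"
  assumes "closed_segment c d \<subseteq> closed_segment c' d'" "dist c' d' \<le> dist c d"
  shows "closed_segment c d = closed_segment c' d'"
proof -
  obtain u where u: "0 \<le> u" "u \<le> 1" "c = (1 - u) *\<^sub>R c' + u *\<^sub>R d'"
    using assms(1) by (auto simp: subset_closed_segment in_segment)
  obtain v where v: "0 \<le> v" "v \<le> 1" "d = (1 - v) *\<^sub>R c' + v *\<^sub>R d'"
    using assms(1) by (auto simp: subset_closed_segment in_segment)
  show ?thesis
  proof (cases "c' = d'")
    case True
    then show ?thesis using u v by (simp add: algebra_simps)
  next
    case False
    have "d - c = (v - u) *\<^sub>R (d' - c')" unfolding u(3) v(3) by (simp add: algebra_simps)
    then have "dist c d = \<bar>v - u\<bar> * dist c' d'"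
      by (metis dist_commute dist_norm norm_scaleR)
    with assms(2) False have "1 \<le> \<bar>v - u\<bar>" by simp
    then have "(u = 0 \<and> v = 1) \<or> (u = 1 \<and> v = 0)" using u v by linarith
    then show ?thesis using u v by (auto simp: closed_segment_commute)
  qed
qed

lemma closed_segments_in_closed_set:
  fixes W :: "'a::real_normed_vector set"
  assumes "closed W"
  shows "closed {z. closed_segment (fst z) (snd z) \<subseteq> W}"
proof -
  have "{z. closed_segment (fst z) (snd z) \<subseteq> W} =
        (\<Inter>u\<in>{0..1}. (\<lambda>z. (1 - u) *\<^sub>R fst z + u *\<^sub>R snd z) -` W)"
    by (auto simp: in_segment subset_iff) (metis order.refl)
  also have "closed \<dots>"
    by (intro closed_INT ballI continuous_closed_vimage assms) (auto intro!: continuous_intros)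
  finally show ?thesis .
qed

lemma closed_segments_through_point:
  fixes x :: "'a::euclidean_space"
  shows "closed {z. x \<in> closed_segment (fst z) (snd z)}"
proof -
  have "x \<in> closed_segment c d \<longleftrightarrow> dist c d = dist c x + dist x d" for c d
    by (simp flip: between_mem_segment add: between)
  then have "{z. x \<in> closed_segment (fst z) (snd z)} =
        {z. dist (fst z) (snd z) = dist (fst z) x + dist x (snd z)}"
    by auto
  also have "closed \<dots>"
    by (intro closed_Collect_eq) (auto intro!: continuous_intros)
  finally show ?thesis .
qed

lemma exists_maximal_closed_segment:
  fixes W :: "'a::euclidean_space set"
  assumes "compact W" "closed_segment a b \<subseteq> W"
  obtains c d where "closed_segment a b \<subseteq> closed_segment c d" "closed_segment c d \<subseteq> W"
    "\<And>c' d'. closed_segment c d \<subseteq> closed_segment c' d' \<Longrightarrow> closed_segment c' d' \<subseteq> W \<Longrightarrow>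
       closed_segment c' d' = closed_segment c d"
proof -
  define K where "K = {z. a \<in> closed_segment (fst z) (snd z)} \<inter> {z. b \<in> closed_segment (fst z) (snd z)}
    \<inter> {z. closed_segment (fst z) (snd z) \<subseteq> W}"
  have K_iff: "(c, d) \<in> K \<longleftrightarrow> closed_segment a b \<subseteq> closed_segment c d \<and> closed_segment c d \<subseteq> W"
    for c d by (simp add: K_def subset_closed_segment)
  have "closed K"
    unfolding K_def using assms(1)
    by (intro closed_Int closed_segments_through_point closed_segments_in_closed_set compact_imp_closed)
  moreover have "K \<subseteq> W \<times> W"
    by (auto simp: K_def)
  then have "bounded K"
    using assms(1) by (metis bounded_Times bounded_subset compact_imp_bounded)
  ultimately have "compact K"
    by (simp add: compact_eq_bounded_closed)
  moreover have "K \<noteq> {}"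
    using assms(2) K_iff by blast
  moreover have "continuous_on K (\<lambda>z. dist (fst z) (snd z))"
    by (intro continuous_intros)
  ultimately have "\<exists>z\<in>K. \<forall>y\<in>K. dist (fst y) (snd y) \<le> dist (fst z) (snd z)"
    by (rule continuous_attains_sup)
  then obtain z where "z \<in> K" and z_max: "\<And>y. y \<in> K \<Longrightarrow> dist (fst y) (snd y) \<le> dist (fst z) (snd z)"
    by blast
  obtain c d where z: "z = (c, d)" by fastforce
  show thesis
  proof
    show ab_cd: "closed_segment a b \<subseteq> closed_segment c d" and "closed_segment c d \<subseteq> W"
      using \<open>z \<in> K\<close> by (simp_all add: z K_iff)
    fix c' d'
    assume cd_c'd': "closed_segment c d \<subseteq> closed_segment c' d'" and "closed_segment c' d' \<subseteq> W"
    with ab_cd have "(c', d') \<in> K"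
      by (simp add: K_iff)
    from z_max[OF this] have "dist c' d' \<le> dist c d"
      by (simp add: z)
    with cd_c'd' show "closed_segment c' d' = closed_segment c d"
      using closed_segment_eq_if_subset_longer by metis
  qed
qed

lemma max_visibility_edge_extension:
  assumes "compact W" "is_segment s" "s \<subseteq> W"
  obtains t where "s \<subseteq> t" "max_visibility_edge W t"
proof -
  obtain a b where "a \<noteq> b" and s: "s = closed_segment a b"
    using assms(2) by (auto simp: is_segment_def)
  obtain c d where ab_cd: "closed_segment a b \<subseteq> closed_segment c d"
    and "closed_segment c d \<subseteq> W"
    and maximal: "\<And>c' d'. closed_segment c d \<subseteq> closed_segment c' d' \<Longrightarrow> closed_segment c' d' \<subseteq> W \<Longrightarrow>
       closed_segment c' d' = closed_segment c d"
    using exists_maximal_closed_segment[OF assms(1)] assms(3) s by metis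
  have "c \<noteq> d"
    using ab_cd \<open>a \<noteq> b\<close> by (auto simp: subset_closed_segment)
  then have "max_visibility_edge W (closed_segment c d)"
    unfolding max_visibility_edge_def is_segment_def using \<open>closed_segment c d \<subseteq> W\<close> maximal by blast
  with ab_cd s that show thesis
    by blast
qed

lemma closed_union_inside:
  fixes B :: "'a::real_normed_vector set"
  assumes "closed B"
  shows "closed (B \<union> inside B)"
  unfolding union_with_inside using open_outside[OF assms] by (simp add: closed_def)

lemma compact_union_inside:
  fixes B :: "'a::euclidean_space set"
  assumes "compact B"
  shows "compact (B \<union> inside B)"
proof -
  have "closed (B \<union> inside B)"
    using assms by (simp add: closed_union_inside compact_imp_closed)
  moreover have "bounded (B \<union> inside B)"
    using assms by (simp add: bounded_inside compact_imp_bounded)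
  ultimately show ?thesis
    by (simp add: compact_eq_bounded_closed)
qed

lemma frontier_interior_union_inside_subset:
  fixes B :: "'a::real_normed_vector set"
  assumes "closed B"
  shows "frontier (interior (B \<union> inside B)) \<subseteq> B"
proof -
  have "inside B \<subseteq> interior (B \<union> inside B)"
    using open_inside[OF assms] by (intro interior_maximal) auto
  moreover have "closure (interior (B \<union> inside B)) \<subseteq> B \<union> inside B"
    by (rule closure_minimal[OF interior_subset closed_union_inside[OF assms]])
  ultimately show ?thesis
    unfolding frontier_def by auto
qed

lemma compact_poly_boundary: "compact (poly_boundary vs)"
  unfolding poly_boundary_def poly_edge_def by (intro compact_UN) auto

lemma compact_poly_region: "compact (poly_region vs)"
  unfolding poly_region_def by (intro compact_union_inside compact_poly_boundary)

lemma frontier_interior_poly_region_subset: "frontier (interior (poly_region vs)) \<subseteq> poly_boundary vs"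
  unfolding poly_region_def
  by (intro frontier_interior_union_inside_subset compact_imp_closed compact_poly_boundary)

lemma path_points_Cons2:
  "path_points (a # b # ps) = closed_segment a b \<union> path_points (b # ps)"
proof -
  have "(\<Union>i<length (a # b # ps) - 1. closed_segment ((a # b # ps) ! i) ((a # b # ps) ! (i + 1)))
      = closed_segment a b \<union> (\<Union>i<length (b # ps) - 1. closed_segment ((b # ps) ! i) ((b # ps) ! (i + 1)))"
    by (simp add: lessThan_Suc_eq_insert_0 del: lessThan_Suc)
  then show ?thesis
    unfolding path_points_def by auto
qed

lemma connected_path_points: "ps \<noteq> [] \<Longrightarrow> connected (path_points ps)"
proof (induction ps rule: induct_list012)
  case (2 a)
  then show ?case by (simp add: path_points_def)
next
  case (3 a b ps)
  have "b \<in> closed_segment a b \<inter> path_points (b # ps)"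
    by (simp add: path_points_def)
  moreover have "connected (path_points (b # ps))"
    using "3.IH"(2) by simp
  ultimately show ?case
    unfolding path_points_Cons2 by (metis connected_Un connected_segment empty_iff)
qed simp

lemma hd_in_path_points: "ps \<noteq> [] \<Longrightarrow> hd ps \<in> path_points ps"
  by (cases ps) (auto simp: path_points_def)

lemma skeleton_if_covers_frontier:
  assumes "\<forall>s\<in>S. is_segment s" "\<Union>S \<subseteq> W" "frontier (interior W) \<subseteq> \<Union>S"
  shows "skeleton W S"
  unfolding skeleton_def
proof (intro conjI assms allI impI)
  fix p q ps
  assume p: "p \<notin> interior W \<and> q \<notin> interior W \<and>
        (\<forall>ps. shortest_rect_path ps p q \<and> card (corner_points ps) \<le> 1 \<longrightarrow>
              path_points ps \<inter> interior W \<noteq> {})"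
    and ps: "shortest_rect_path ps p q \<and> card (corner_points ps) \<le> 1"
  have "ps \<noteq> []" "hd ps = p"
    using ps by (auto simp: shortest_rect_path_def rect_path_between_def rect_path_def)
  have "path_points ps \<inter> frontier (interior W) \<noteq> {}"
  proof (rule connected_Int_frontier)
    show "connected (path_points ps)"
      using \<open>ps \<noteq> []\<close> by (rule connected_path_points)
    show "path_points ps \<inter> interior W \<noteq> {}"
      using p ps by blast
    show "path_points ps - interior W \<noteq> {}"
      using hd_in_path_points[OF \<open>ps \<noteq> []\<close>] \<open>hd ps = p\<close> p by blast
  qed
  with assms(3) show "\<exists>s\<in>S. path_points ps \<inter> s \<noteq> {}"
    by blast
qed

lemma is_segment_poly_edge:
  assumes "simple_polygon vs" "i < length vs"
  shows "is_segment (poly_edge vs i)"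
proof -
  let ?n = "length vs"
  have "?n \<ge> 3" "distinct vs"
    using assms(1) by (auto simp: simple_polygon_def)
  moreover have "(i + 1) mod n \<noteq> i \<and> (i + 1) mod n < n" if "i < n" "3 \<le> n" for n :: nat
    using that by (cases "i + 1 = n") auto
  ultimately have "vs ! i \<noteq> vs ! ((i + 1) mod ?n)"
    using assms(2) by (metis nth_eq_iff_index_eq)
  then show ?thesis
    unfolding is_segment_def poly_edge_def by blast
qed

lemma poly_edges_skeleton:
  assumes "simple_polygon vs"
  shows "skeleton (poly_region vs) (poly_edge vs ` {..<length vs})"
proof (rule skeleton_if_covers_frontier)
  show "\<forall>s\<in>poly_edge vs ` {..<length vs}. is_segment s"
    using is_segment_poly_edge[OF assms] by blast
  show "\<Union> (poly_edge vs ` {..<length vs}) \<subseteq> poly_region vs"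
    by (auto simp: poly_region_def poly_boundary_def)
  show "frontier (interior (poly_region vs)) \<subseteq> \<Union> (poly_edge vs ` {..<length vs})"
    using frontier_interior_poly_region_subset by (simp add: poly_boundary_def)
qed

lemma exists_minimum_skeleton:
  assumes "finite T" "skeleton W T"
  obtains S where "minimum_skeleton W S"
  using ex_has_least_nat[of "\<lambda>S. finite S \<and> skeleton W S" T card] assms
  by (auto simp: minimum_skeleton_def)

lemma skeleton_image_supersegments:
  assumes "skeleton W S" "\<And>s. s \<in> S \<Longrightarrow> s \<subseteq> g s \<and> is_segment (g s) \<and> g s \<subseteq> W"
  shows "skeleton W (g ` S)"
  unfolding skeleton_def
proof (intro conjI allI impI ballI)
  show "is_segment t" if "t \<in> g ` S" for t
    using that assms(2) by auto
  show "\<Union> (g ` S) \<subseteq> W"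
    using assms(2) by blast
  fix p q ps
  assume "p \<notin> interior W \<and> q \<notin> interior W \<and>
        (\<forall>ps. shortest_rect_path ps p q \<and> card (corner_points ps) \<le> 1 \<longrightarrow>
              path_points ps \<inter> interior W \<noteq> {})"
    and "shortest_rect_path ps p q \<and> card (corner_points ps) \<le> 1"
  then obtain s where "s \<in> S" "path_points ps \<inter> s \<noteq> {}"
    using assms(1) unfolding skeleton_def by blast
  then show "\<exists>t\<in>g ` S. path_points ps \<inter> t \<noteq> {}"
    using assms(2) by blast
qed

lemma minimum_skeleton_image_supersegments:
  assumes "minimum_skeleton W S" "\<And>s. s \<in> S \<Longrightarrow> s \<subseteq> g s \<and> is_segment (g s) \<and> g s \<subseteq> W"
  shows "minimum_skeleton W (g ` S)"
  using assms skeleton_image_supersegments[of W S g] card_image_le[of S g]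
  unfolding minimum_skeleton_def by (meson finite_imageI le_trans)

theorem lemma1:
  fixes vs :: "pt list"
  assumes "obstacle vs"
    and "rectilinear_polygon vs"
    and "rectilinearly_convex (poly_region vs)"
  shows "\<exists>S. minimum_skeleton (poly_region vs) S \<and>
           (\<forall>s\<in>S. max_visibility_edge (poly_region vs) s)"
proof -
  let ?W = "poly_region vs"
  have "simple_polygon vs"
    using assms(1) by (simp add: obstacle_def)
  then obtain S where S: "minimum_skeleton ?W S"
    using exists_minimum_skeleton poly_edges_skeleton by blast
  have "\<exists>t. s \<subseteq> t \<and> max_visibility_edge ?W t" if "s \<in> S" for s
  proof -
    have "is_segment s" "s \<subseteq> ?W"
      using S that by (auto simp: minimum_skeleton_def skeleton_def)
    then show ?thesis
      by (meson compact_poly_region max_visibility_edge_extension)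
  qed
  then obtain g where g: "\<And>s. s \<in> S \<Longrightarrow> s \<subseteq> g s \<and> max_visibility_edge ?W (g s)"
    by metis
  then have "minimum_skeleton ?W (g ` S)"
    by (intro minimum_skeleton_image_supersegments[OF S]) (simp add: max_visibility_edge_def)
  with g show ?thesis
    by blast
qed

end
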